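(* Let $(S,+)$ be a commutative cancellative semigroup with no identity element such that its difference group $S-S$ carries a multiplication $\cdot$ making $(S-S,+,\cdot)$ an integral domain. Suppose $\kappa$ is an infinite regular cardinal, $|S|=\kappa$, and $((S-S)\setminus\{0\},\cdot)$ is a very weakly cancellative semigroup. Then every PP-rich set in $S$ has cardinality $\kappa$.
   Context: $S-S=\{a-b:a,b\in S\}$ is the difference group of $S$. $\mathbb{P}$ is the set of polynomial functions $S-S\to S-S$ in one variable with coefficients in $S-S$ and zero constant term; $\mathcal{P}_f(\mathbb{P})$ the set of its nonempty finite subsets. $A\subseteq S$ is PP-rich if for every $R\in\mathcal{P}_f(\mathbb{P})$ there exist $a,x\in S$ with $\{a+f(x): f\in R\}\subseteq A$. An infinite semigroup $(T,\cdot)$ of cardinality $\nu$ is very weakly cancellative if the union of fewer than $\nu$ sets of the form $\{x: a x=b\}$ has cardinality $<\nu$, and likewise for sets of the form $\{x: x a=b\}$. *)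

theory Defs
  imports Main "HOL-Computational_Algebra.Polynomial"
begin

text \<open>The semigroup (S,+) is modelled as a subset of the additive group of an
integral domain 'a, closed under +, whose differences exhaust 'a
(so 'a is the difference group S - S with its given ring structure).\<close>

definition diff_set :: "'a::ab_group_add set \<Rightarrow> 'a set" where
  "diff_set S = {a - b | a b. a \<in> S \<and> b \<in> S}"

definition PP :: "('a::comm_ring_1 \<Rightarrow> 'a) set" where
  "PP = {(\<lambda>x. poly p x) | p. coeff p 0 = 0}"

definition PP_rich :: "'a::comm_ring_1 set \<Rightarrow> 'a set \<Rightarrow> bool" where
  "PP_rich S A \<longleftrightarrow> A \<subseteq> S \<and>
     (\<forall>R. finite R \<and> R \<noteq> {} \<and> R \<subseteq> PP \<longrightarrow>
        (\<exists>a\<in>S. \<exists>x\<in>S. (\<forall>f\<in>R. a + f x \<in> A)))"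

definition very_weakly_cancellative :: "'a::times set \<Rightarrow> bool" where
  "very_weakly_cancellative T \<longleftrightarrow> infinite T \<and> (\<forall>x\<in>T. \<forall>y\<in>T. x * y \<in> T) \<and>
     (\<forall>P. P \<subseteq> T \<times> T \<and> ordLess2 (card_of P) (card_of T) \<longrightarrow>
        ordLess2 (card_of (\<Union>(a,b)\<in>P. {x\<in>T. a * x = b})) (card_of T) \<and>
        ordLess2 (card_of (\<Union>(a,b)\<in>P. {x\<in>T. x * a = b})) (card_of T))"

end

theory Submission
  imports Defs
begin

text \<open>Suppose a PP-rich set \<open>A\<close> had fewer than \<open>\<kappa>\<close> elements. Then so has its
difference set, and by very weak cancellativity some nonzero \<open>c\<close> is not a quotient
\<open>v / u\<close> of nonzero differences. Richness for the pattern \<open>{0, x, c x}\<close> yields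
\<open>a, a + x, a + c x \<in> A\<close> with \<open>x \<in> S\<close>, so \<open>x\<close> and \<open>c x\<close> are such differences,
nonzero because \<open>0 \<notin> S\<close>, and \<open>c = c x / x\<close> is a quotient after all.
Besides richness, only \<open>0 \<notin> S\<close> (from the lack of an identity), \<open>|S| = \<kappa>\<close> infinite and
very weak cancellativity are used.\<close>

unbundle cardinal_syntax

lemma card_of_Times_self_ordLess_infinite:
  assumes "|X| <o |S|" and "infinite S"
  shows "|X \<times> X| <o |S|"
proof (cases "finite X")
  case True
  then have "finite (X \<times> X)" by simp
  then show ?thesis
    using assms(2) finite_ordLess_infinite[OF card_of_Well_order card_of_Well_order]
    unfolding Field_card_of by blast
next
  case False
  then have "|X \<times> X| =o |X|" by (rule card_of_Times_same_infinite)
  then show ?thesis using assms(1) ordIso_ordLess_trans by blast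
qed

lemma card_of_diff_set_ordLess_infinite:
  assumes "|A| <o |S|" and "infinite S"
  shows "|diff_set A| <o |S|"
proof -
  have "diff_set A = (\<lambda>(u, v). u - v) ` (A \<times> A)"
    unfolding diff_set_def by auto
  then have "|diff_set A| \<le>o |A \<times> A|" by (metis card_of_image)
  moreover have "|A \<times> A| <o |S|"
    using assms by (rule card_of_Times_self_ordLess_infinite)
  ultimately show ?thesis by (rule ordLeq_ordLess_trans)
qed

lemma very_weakly_cancellative_avoids_quotients:
  assumes vwc: "very_weakly_cancellative T"
    and D_small: "|D| <o |T|" and "D \<subseteq> T"
  obtains c where "c \<in> T" and "\<forall>u\<in>D. \<forall>v\<in>D. u * c \<noteq> v"
proof -
  define U where "U = (\<Union>(u, v)\<in>D \<times> D. {x\<in>T. u * x = v})"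
  have "infinite T"
    and small_unions: "\<And>P. P \<subseteq> T \<times> T \<Longrightarrow> |P| <o |T| \<Longrightarrow>
      |\<Union>(u, v)\<in>P. {x\<in>T. u * x = v}| <o |T|"
    using vwc unfolding very_weakly_cancellative_def by blast+
  then have "|D \<times> D| <o |T|"
    using D_small card_of_Times_self_ordLess_infinite by blast
  then have "|U| <o |T|"
    unfolding U_def using \<open>D \<subseteq> T\<close> by (intro small_unions) auto
  then have "\<not> T \<subseteq> U"
    using card_of_mono1 not_ordLess_ordLeq by blast
  then obtain c where "c \<in> T" "c \<notin> U" by blast
  then show ?thesis using that unfolding U_def by blast
qed

lemma scaling_in_PP: "(\<lambda>x. c * x) \<in> PP"
  unfolding PP_def
  by (intro CollectI exI[of _ "[:0, c:]"]) (simp add: fun_eq_iff mult.commute)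

lemma PP_rich_scaled_differences:
  fixes c :: "'a::comm_ring_1"
  assumes "PP_rich S A"
  obtains x where "x \<in> S" and "x \<in> diff_set A" and "c * x \<in> diff_set A"
proof -
  define R where "R = {\<lambda>x. 0 * x, \<lambda>x. 1 * x, \<lambda>x. c * x :: 'a}"
  have "finite R \<and> R \<noteq> {} \<and> R \<subseteq> PP"
    unfolding R_def using scaling_in_PP by blast
  then obtain a x where "x \<in> S" and pattern: "\<forall>f\<in>R. a + f x \<in> A"
    using assms unfolding PP_rich_def by blast
  have "a \<in> A" "a + x \<in> A" "a + c * x \<in> A"
    using pattern unfolding R_def by auto
  then have "x \<in> diff_set A" and "c * x \<in> diff_set A"
    unfolding diff_set_def by force+
  with \<open>x \<in> S\<close> show ?thesis using that by blast
qed

theorem theorem5p6: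
  fixes S :: "'a::idom set"
  assumes semigroup: "\<forall>x\<in>S. \<forall>y\<in>S. x + y \<in> S"
    and diff_group: "diff_set S = UNIV"
    and no_identity: "\<not> (\<exists>e\<in>S. \<forall>s\<in>S. e + s = s)"
    and kappa_infinite: "infinite S"
    and kappa_regular: "regularCard (card_of S)"
    and vwc: "very_weakly_cancellative (UNIV - {0::'a})"
    and rich: "PP_rich S A"
  shows "ordIso2 (card_of A) (card_of S)"
proof -
  have "A \<subseteq> S" using rich unfolding PP_rich_def by (rule conjunct1)
  then have "|A| \<le>o |S|" by (rule card_of_mono1)
  moreover have "|S| \<le>o |A|"
  proof (rule ccontr)
    assume "\<not> |S| \<le>o |A|"
    then have "|A| <o |S|"
      using not_ordLeq_iff_ordLess[OF card_of_Well_order card_of_Well_order] by blast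
    then have "|diff_set A| <o |S|"
      using kappa_infinite by (rule card_of_diff_set_ordLess_infinite)
    then have "|diff_set A - {0}| <o |S|"
      using card_of_mono1[of "diff_set A - {0}"] ordLeq_ordLess_trans by blast
    moreover have "0 \<notin> S" using no_identity by force
    then have "|S| \<le>o |UNIV - {0::'a}|" by (intro card_of_mono1) blast
    ultimately have "|diff_set A - {0}| <o |UNIV - {0::'a}|"
      by (rule ordLess_ordLeq_trans)
    with vwc obtain c where "c \<in> UNIV - {0::'a}"
      and c: "\<forall>u\<in>diff_set A - {0}. \<forall>v\<in>diff_set A - {0}. u * c \<noteq> v"
      by (rule very_weakly_cancellative_avoids_quotients) blast
    obtain x where "x \<in> S" "x \<in> diff_set A" "c * x \<in> diff_set A"
      using PP_rich_scaled_differences[OF rich] .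
    moreover from this \<open>0 \<notin> S\<close> \<open>c \<in> UNIV - {0}\<close> have "x \<noteq> 0" "c * x \<noteq> 0" by auto
    ultimately show False using c by (metis Diff_iff mult.commute singletonD)
  qed
  ultimately show ?thesis using ordIso_iff_ordLeq by blast
qed

end
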